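(* Let $p$ be a prime and let $P$ be a no-signalling box with inputs and outputs in $\mathbb{Z}_p$ that satisfies information causality. Then for every integer $N$ with $1\le N\le p$ and every $c\in\mathbb{Z}_p$, $$\frac1p\sum_{k=0}^{p-1}\omega_p^{ck}\Big(\sum_{j=0}^{p-1}\mu_j\omega_p^{jk}\Big)^{N-1}\le T_p^{-1}\Big(\frac{N-1}{N}\log_2p\Big),$$ where $\omega_p=e^{2\pi i/p}$ and $\mu_j=\frac1{p^2}\sum_{x,y=0}^{p-1}\sum_{k=0}^{p-1}P(a=k,\,b=k-xy+j\mid x,y)$.
   Context: Let $p$ be a prime. All arithmetic on elements of $\mathbb{Z}_p$ is modulo $p$. A box is a conditional probability distribution $P(a,b\mid x,y)$ with $a,b,x,y\in\mathbb{Z}_p$. It is shared by Alice, who supplies $x$ and receives $a$, and Bob, who supplies $y$ and receives $b$. Different copies act independently. $P$ is no-signalling if $\sum_bP(a,b\mid x,y)$ does not depend on $y$ and $\sum_aP(a,b\mid x,y)$ does not depend on $x$. $P$ satisfies information causality if, for every $N\ge1$, every protocol of the following form satisfies $\sum_{i=0}^{N-1}I(x_i:b\mid y=i)\le\log_2p$. In the protocol: - Alice receives $\vec x=(x_0,\dots,x_{N-1})$ uniform in $\mathbb{Z}_p^N$, and Bob receives $y$ uniform in $\{0,\dots,N-1\}$, independent of $\vec x$. - They share randomness (independent of the inputs) and finitely many copies of $P$. - Alice's inputs to her ends of the boxes are functions of $\vec x$, the shared randomness, and her previously obtained outputs. - Alice sends a single message $q\in\mathbb{Z}_p$ to Bob,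 which is a function of $\vec x$, the randomness, and her outputs. - Bob's inputs to his ends of the boxes are functions of $y$, $q$, the shared randomness, and his previously obtained outputs. - Bob finally outputs $b\in\mathbb{Z}_p$. Here $I(x_i:b\mid y=i)$ is the Shannon mutual information (in bits) between $x_i$ and $b$ under the distribution conditioned on $y=i$. Let $h(x)=-x\log_2x-(1-x)\log_2(1-x)$ and $T_p(x)=h(x)+(1-x)\log_2(p-1)$. On $[1/p,1]$, $T_p$ decreases strictly from $\log_2p$ to $0$. $T_p^{-1}:[0,\log_2p]\to[1/p,1]$ denotes the inverse of this restriction. *)

theory Defs
  imports "HOL-Analysis.Analysis"
begin

text \<open>Elements of Z_p are represented by naturals below p.  A box is
  P a b x y = P(a,b | x,y).\<close>

definition tuples :: "nat \<Rightarrow> nat \<Rightarrow> nat list set" where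
  "tuples p n = {xs. set xs \<subseteq> {..<p} \<and> length xs = n}"

definition is_box :: "nat \<Rightarrow> (nat \<Rightarrow> nat \<Rightarrow> nat \<Rightarrow> nat \<Rightarrow> real) \<Rightarrow> bool" where
  "is_box p P \<longleftrightarrow>
     (\<forall>a<p. \<forall>b<p. \<forall>x<p. \<forall>y<p. 0 \<le> P a b x y) \<and>
     (\<forall>x<p. \<forall>y<p. (\<Sum>a<p. \<Sum>b<p. P a b x y) = 1)"

definition no_signalling :: "nat \<Rightarrow> (nat \<Rightarrow> nat \<Rightarrow> nat \<Rightarrow> nat \<Rightarrow> real) \<Rightarrow> bool" where
  "no_signalling p P \<longleftrightarrow>
     (\<forall>a<p. \<forall>x<p. \<forall>y<p. \<forall>y'<p. (\<Sum>b<p. P a b x y) = (\<Sum>b<p. P a b x y')) \<and>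
     (\<forall>b<p. \<forall>x<p. \<forall>x'<p. \<forall>y<p. (\<Sum>a<p. P a b x y) = (\<Sum>a<p. P a b x' y))"

text \<open>A protocol with M copies of the box, shared randomness r < R with weights w,
  Alice's box inputs fA xs r (previous outputs), message fQ xs r (all outputs),
  Bob's box inputs fB y q r (previous outputs), Bob's guess fOut y q r (all outputs).
  All values are reduced mod p, so every function gives a valid protocol.
  prot_out_prob gives Pr(b = v | Alice's input xs, Bob's input y).\<close>

definition prot_out_prob ::
  "nat \<Rightarrow> (nat \<Rightarrow> nat \<Rightarrow> nat \<Rightarrow> nat \<Rightarrow> real) \<Rightarrow> nat \<Rightarrow> nat \<Rightarrow> (nat \<Rightarrow> real)
   \<Rightarrow> (nat list \<Rightarrow> nat \<Rightarrow> nat list \<Rightarrow> nat) \<Rightarrow> (nat list \<Rightarrow> nat \<Rightarrow> nat list \<Rightarrow> nat)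
   \<Rightarrow> (nat \<Rightarrow> nat \<Rightarrow> nat \<Rightarrow> nat list \<Rightarrow> nat) \<Rightarrow> (nat \<Rightarrow> nat \<Rightarrow> nat \<Rightarrow> nat list \<Rightarrow> nat)
   \<Rightarrow> nat list \<Rightarrow> nat \<Rightarrow> nat \<Rightarrow> real" where
  "prot_out_prob p P M R w fA fQ fB fOut xs y v =
     (\<Sum>r<R. w r * (\<Sum>as\<in>tuples p M. \<Sum>bs\<in>tuples p M.
        (let q = fQ xs r as mod p in
         if fOut y q r bs mod p = v then
           (\<Prod>m<M. P (as ! m) (bs ! m) (fA xs r (take m as) mod p) (fB y q r (take m bs) mod p))
         else 0)))"

definition ic_joint ::
  "nat \<Rightarrow> (nat \<Rightarrow> nat \<Rightarrow> nat \<Rightarrow> nat \<Rightarrow> real) \<Rightarrow> nat \<Rightarrow> nat \<Rightarrow> nat \<Rightarrow> (nat \<Rightarrow> real)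
   \<Rightarrow> (nat list \<Rightarrow> nat \<Rightarrow> nat list \<Rightarrow> nat) \<Rightarrow> (nat list \<Rightarrow> nat \<Rightarrow> nat list \<Rightarrow> nat)
   \<Rightarrow> (nat \<Rightarrow> nat \<Rightarrow> nat \<Rightarrow> nat list \<Rightarrow> nat) \<Rightarrow> (nat \<Rightarrow> nat \<Rightarrow> nat \<Rightarrow> nat list \<Rightarrow> nat)
   \<Rightarrow> nat \<Rightarrow> nat \<Rightarrow> nat \<Rightarrow> real" where
  "ic_joint p P N M R w fA fQ fB fOut i u v =
     (1 / real p ^ N) * (\<Sum>xs\<in>tuples p N.
        if xs ! i = u then prot_out_prob p P M R w fA fQ fB fOut xs i v else 0)"

definition mutual_info :: "nat \<Rightarrow> (nat \<Rightarrow> nat \<Rightarrow> real) \<Rightarrow> real" where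
  "mutual_info p Q =
     (\<Sum>u<p. \<Sum>v<p. if Q u v = 0 then 0
        else Q u v * log 2 (Q u v / ((\<Sum>v'<p. Q u v') * (\<Sum>u'<p. Q u' v))))"

definition info_causality :: "nat \<Rightarrow> (nat \<Rightarrow> nat \<Rightarrow> nat \<Rightarrow> nat \<Rightarrow> real) \<Rightarrow> bool" where
  "info_causality p P \<longleftrightarrow>
     (\<forall>N M R w fA fQ fB fOut. 1 \<le> N \<longrightarrow> (\<forall>r<R. 0 \<le> w r) \<longrightarrow> (\<Sum>r<R. w r) = 1 \<longrightarrow>
        (\<Sum>i<N. mutual_info p (ic_joint p P N M R w fA fQ fB fOut i)) \<le> log 2 (real p))"

definition bin_entropy :: "real \<Rightarrow> real" where
  "bin_entropy x = - x * log 2 x - (1 - x) * log 2 (1 - x)"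

definition T_p :: "nat \<Rightarrow> real \<Rightarrow> real" where
  "T_p p x = bin_entropy x + (1 - x) * log 2 (real p - 1)"

definition T_p_inv :: "nat \<Rightarrow> real \<Rightarrow> real" where
  "T_p_inv p t = (THE x. x \<in> {1 / real p .. 1} \<and> T_p p x = t)"

definition omega :: "nat \<Rightarrow> complex" where
  "omega p = cis (2 * pi / real p)"

definition mu :: "nat \<Rightarrow> (nat \<Rightarrow> nat \<Rightarrow> nat \<Rightarrow> nat \<Rightarrow> real) \<Rightarrow> nat \<Rightarrow> real" where
  "mu p P j = (1 / real p ^ 2) *
     (\<Sum>x<p. \<Sum>y<p. \<Sum>k<p. P k (nat ((int k - int x * int y + int j) mod int p)) x y)"

end

theory Submission
  imports Defs "HOL-Real_Asymp.Real_Asymp"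
begin

text \<open>With \<open>N - 1\<close> boxes whose inputs are randomised by shared uniform shifts, Bob can
  output \<open>x\<^sub>i + Z\<close>, where \<open>Z\<close> is a sum of \<open>N - 1\<close> independent \<open>\<mu>\<close>-distributed variables,
  so that \<open>Z\<close> has the \<open>(N - 1)\<close>-fold convolution \<open>\<nu>\<close> of \<open>\<mu>\<close> as distribution.  Then
  \<open>I(x\<^sub>i : b) = log p - H(\<nu>)\<close> for every \<open>i\<close>, and information causality forces
  \<open>H(\<nu>) \<ge> (N - 1) / N log p\<close>.  By Fano's inequality \<open>H(\<nu>) \<le> T\<^sub>p(\<nu> z)\<close> for every \<open>z\<close>,
  so \<open>\<nu> z \<le> T\<^sub>p\<^sup>-\<^sup>1((N - 1) / N log p)\<close> because \<open>T\<^sub>p\<close> decreases on \<open>[1/p, 1]\<close>.  By the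
  convolution theorem and Fourier inversion, the left-hand side of the claim is \<open>\<nu>(-c)\<close>.\<close>

lemma finite_tuples [simp]: "finite (tuples p n)"
  unfolding tuples_def by (rule finite_lists_length_eq) simp

lemma card_tuples: "card (tuples p n) = p ^ n"
  unfolding tuples_def using card_lists_length_eq[of "{..<p}" n] by simp

lemma tuples_0 [simp]: "tuples p 0 = {[]}"
  unfolding tuples_def by auto

lemma nth_tuples_less: "xs \<in> tuples p n \<Longrightarrow> j < n \<Longrightarrow> xs ! j < p"
  unfolding tuples_def by (auto dest: nth_mem)

lemma sum_tuples_Suc:
  "(\<Sum>xs\<in>tuples p (Suc n). f xs) = (\<Sum>a<p. \<Sum>xs\<in>tuples p n. f (a # xs))"
proof -
  have "tuples p (Suc n) = (\<lambda>(a, xs). a # xs) ` ({..<p} \<times> tuples p n)"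
    unfolding tuples_def by (auto simp: length_Suc_conv)
  then have "(\<Sum>xs\<in>tuples p (Suc n). f xs) = (\<Sum>(a, xs)\<in>{..<p} \<times> tuples p n. f (a # xs))"
    by (simp add: sum.reindex inj_on_def case_prod_unfold)
  then show ?thesis
    by (simp add: sum.cartesian_product)
qed

lemma sum_tuples_nth_eq:
  "i < n \<Longrightarrow> u < p \<Longrightarrow> (\<Sum>xs\<in>tuples p n. if xs ! i = u then c else 0) = (c :: real) * p ^ (n - 1)"
proof (induction n arbitrary: i)
  case 0
  then show ?case by simp
next
  case (Suc n)
  show ?case
  proof (cases i)
    case 0
    then show ?thesis
      using Suc.prems by (simp add: sum_tuples_Suc card_tuples flip: sum_distrib_left)
  next
    case (Suc j)
    then have "j < n" using Suc.prems by simp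
    then show ?thesis
      using Suc.IH[of j] Suc.prems \<open>i = Suc j\<close> by (cases n) (simp_all add: sum_tuples_Suc)
  qed
qed

lemma bij_betw_add_mod:
  fixes p :: nat
  assumes "0 < p"
  shows "bij_betw (\<lambda>z. (z + k) mod p) {..<p} {..<p}"
proof -
  have "inj_on (\<lambda>z. (z + k) mod p) {..<p}"
  proof (rule inj_onI)
    fix x y :: nat
    assume "x \<in> {..<p}" "y \<in> {..<p}" "(x + k) mod p = (y + k) mod p"
    then have "(int x + int k) mod int p = (int y + int k) mod int p"
      by (metis of_nat_add zmod_int)
    then have "int x mod int p = int y mod int p"
      by (metis add_diff_cancel_right' mod_diff_left_eq)
    then show "x = y" using \<open>x \<in> {..<p}\<close> \<open>y \<in> {..<p}\<close> by simp
  qed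
  moreover have "(\<lambda>z. (z + k) mod p) ` {..<p} \<subseteq> {..<p}" using assms by auto
  ultimately show ?thesis
    by (simp add: bij_betw_def card_image card_subset_eq)
qed

lemma sum_add_mod: "0 < (p::nat) \<Longrightarrow> (\<Sum>z<p. f ((z + k) mod p)) = (\<Sum>z<p. f z)"
  using sum.reindex_bij_betw[OF bij_betw_add_mod] .

lemma sum_diff_mod: "0 < (p::nat) \<Longrightarrow> d \<le> p \<Longrightarrow> (\<Sum>z<p. f ((z + p - d) mod p)) = (\<Sum>z<p. f z)"
  using sum_add_mod[of p f "p - d"] by simp

lemma sum_reflect_mod:
  fixes p :: nat
  assumes "v < p"
  shows "(\<Sum>u<p. f ((v + p - u) mod p)) = (\<Sum>u<p. f u)"
proof -
  have involution: "(v + p - (v + p - u) mod p) mod p = u" if "u < p" for u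
    using assms that by (cases "u \<le> v") (auto simp: mod_if)
  show ?thesis
    by (rule sum.reindex_bij_witness[where i = "\<lambda>u. (v + p - u) mod p" and j = "\<lambda>u. (v + p - u) mod p"])
       (use assms involution in auto)
qed

lemma add_mod_eq_iff:
  fixes p :: nat
  assumes "z < p"
  shows "(a + s) mod p = z \<longleftrightarrow> s mod p = (z + p - a mod p) mod p"
proof -
  define a' s' where "a' = a mod p" and "s' = s mod p"
  have "a' < p" "s' < p" using assms by (auto simp: a'_def s'_def)
  have "(a + s) mod p = (a' + s') mod p" by (simp add: a'_def s'_def mod_add_eq)
  also have "\<dots> = (if a' + s' < p then a' + s' else a' + s' - p)"
    using \<open>a' < p\<close> \<open>s' < p\<close> by (simp add: mod_if[of "a' + s'"] mod_if[of "a' + s' - p"])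
  finally have "(a + s) mod p = (if a' + s' < p then a' + s' else a' + s' - p)" .
  moreover have "(z + p - a') mod p = (if z + p - a' < p then z + p - a' else z - a')"
    using \<open>a' < p\<close> assms by (simp add: mod_if[of "z + p - a'"] mod_if[of "z - a'"])
  ultimately show ?thesis
    using \<open>a' < p\<close> \<open>s' < p\<close> assms by (auto simp: a'_def[symmetric] s'_def[symmetric])
qed

lemma add_diff_mod_cancel: "z < (p::nat) \<Longrightarrow> d < p \<Longrightarrow> ((z + d) mod p + p - d) mod p = z"
  by (cases "z + d < p") (auto simp: mod_if)

lemma sum_lessThan_square: "(\<Sum>e<(p::nat) * p. f (e div p) (e mod p)) = (\<Sum>s<p. \<Sum>t<p. f s t)"
proof -
  have "(\<Sum>e<p * p. f (e div p) (e mod p)) = (\<Sum>s<p. \<Sum>t<p. f ((t + s * p) div p) ((t + s * p) mod p))"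
    by (rule sum_mult_product)
  also have "\<dots> = (\<Sum>s<p. \<Sum>t<p. f s t)"
    by (intro sum.cong refl) simp
  finally show ?thesis .
qed

section \<open>Convolution of distributions on residues modulo p\<close>

fun convolution :: "nat \<Rightarrow> nat \<Rightarrow> (nat \<Rightarrow> nat \<Rightarrow> real) \<Rightarrow> nat \<Rightarrow> real" where
  "convolution p 0 D z = (if z = 0 then 1 else 0)"
| "convolution p (Suc M) D z =
     (\<Sum>d<p. D 0 d * convolution p M (\<lambda>m. D (Suc m)) ((z + p - d) mod p))"

lemma convolution_nonneg: "(\<And>m d. 0 \<le> D m d) \<Longrightarrow> 0 \<le> convolution p M D z"
  by (induction M arbitrary: D z) (simp_all add: sum_nonneg)

lemma convolution_cong:
  "(\<And>m d. d < p \<Longrightarrow> D m d = D' m d) \<Longrightarrow> convolution p M D z = convolution p M D' z"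
proof (induction M arbitrary: D D' z)
  case (Suc M)
  have "convolution p M (\<lambda>m. D (Suc m)) w = convolution p M (\<lambda>m. D' (Suc m)) w" for w
    by (rule Suc.IH) (use Suc.prems in auto)
  then show ?case
    using Suc.prems by simp
qed simp

lemma sum_convolution:
  assumes "0 < p"
  shows "(\<Sum>z<p. convolution p M D z) = (\<Prod>m<M. \<Sum>d<p. D m d)"
proof (induction M arbitrary: D)
  case 0
  then show ?case using assms by simp
next
  case (Suc M)
  have "(\<Sum>z<p. convolution p (Suc M) D z)
      = (\<Sum>d<p. D 0 d * (\<Sum>z<p. convolution p M (\<lambda>m. D (Suc m)) ((z + p - d) mod p)))"
    by (simp add: sum_distrib_left) (rule sum.swap)
  also have "\<dots> = (\<Sum>d<p. D 0 d) * (\<Prod>m<M. \<Sum>d<p. D (Suc m) d)"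
    using assms by (simp add: sum_diff_mod Suc.IH sum_distrib_right)
  finally show ?case
    by (simp add: prod.lessThan_Suc_shift del: prod.lessThan_Suc)
qed

lemma digit_Suc: "(e::nat) < q \<Longrightarrow> (e + r * q) div q ^ Suc m mod q = r div q ^ m mod q"
  by (simp add: div_mult2_eq power_Suc2)

lemma sum_swap_past_three:
  "(\<Sum>w\<in>W. \<Sum>x\<in>A. \<Sum>y\<in>B. \<Sum>z\<in>C. f w x y z) = (\<Sum>x\<in>A. \<Sum>y\<in>B. \<Sum>z\<in>C. \<Sum>w\<in>W. f w x y z)"
  by (simp add: sum.swap[of _ W])

text \<open>The digits of \<open>r < q ^ M\<close> in base \<open>q\<close> together with the tuples \<open>as\<close>, \<open>bs\<close>
  are \<open>M\<close> independent coordinates, so the distribution of the sum modulo \<open>p\<close> of the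
  per-coordinate quantities \<open>h m\<close>, weighted by the product of \<open>g m\<close>, is a convolution.\<close>

lemma sum_prod_mod_eq_convolution:
  fixes h :: "nat \<Rightarrow> nat \<Rightarrow> nat \<Rightarrow> nat \<Rightarrow> nat" and g :: "nat \<Rightarrow> nat \<Rightarrow> nat \<Rightarrow> nat \<Rightarrow> real"
  assumes "z < p"
  shows "(\<Sum>r<q ^ M. \<Sum>as\<in>tuples p M. \<Sum>bs\<in>tuples p M.
            if (\<Sum>m<M. h m (r div q ^ m mod q) (as ! m) (bs ! m)) mod p = z
            then \<Prod>m<M. g m (r div q ^ m mod q) (as ! m) (bs ! m) else 0)
       = convolution p M (\<lambda>m d. \<Sum>e<q. \<Sum>a<p. \<Sum>b<p. if h m e a b mod p = d then g m e a b else 0) z"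
  using assms
proof (induction M arbitrary: g h z)
  case 0
  then show ?case by simp
next
  case (Suc M)
  define D where "D m d = (\<Sum>e<q. \<Sum>a<p. \<Sum>b<p. if h m e a b mod p = d then g m e a b else 0)"
    for m d
  define Z where "Z e a b = (z + p - h 0 e a b mod p) mod p" for e a b
  define G where "G e a b r as bs =
    (if (\<Sum>m<M. h (Suc m) (r div q ^ m mod q) (as ! m) (bs ! m)) mod p = Z e a b
     then \<Prod>m<M. g (Suc m) (r div q ^ m mod q) (as ! m) (bs ! m) else 0)" for e a b r as bs
  have IH: "(\<Sum>r<q ^ M. \<Sum>as\<in>tuples p M. \<Sum>bs\<in>tuples p M. G e a b r as bs)
      = convolution p M (\<lambda>m. D (Suc m)) (Z e a b)" for e a b
    unfolding G_def D_def using Suc.IH[of "Z e a b"] Suc.prems by (simp add: Z_def)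
  have split: "(if (\<Sum>m<Suc M. h m ((e + r * q) div q ^ m mod q) ((a # as) ! m) ((b # bs) ! m)) mod p = z
      then \<Prod>m<Suc M. g m ((e + r * q) div q ^ m mod q) ((a # as) ! m) ((b # bs) ! m) else 0)
    = g 0 e a b * G e a b r as bs" if "e < q" for e a b r as bs
    using that add_mod_eq_iff[OF Suc.prems, of "h 0 e a b"]
    by (simp add: sum.lessThan_Suc_shift prod.lessThan_Suc_shift digit_Suc G_def Z_def
             del: sum.lessThan_Suc prod.lessThan_Suc power_Suc)
  have "(\<Sum>r<q ^ Suc M. \<Sum>as\<in>tuples p (Suc M). \<Sum>bs\<in>tuples p (Suc M).
            if (\<Sum>m<Suc M. h m (r div q ^ m mod q) (as ! m) (bs ! m)) mod p = z
            then \<Prod>m<Suc M. g m (r div q ^ m mod q) (as ! m) (bs ! m) else 0)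
      = (\<Sum>r<q ^ M. \<Sum>e<q. \<Sum>a<p. \<Sum>as\<in>tuples p M. \<Sum>b<p. \<Sum>bs\<in>tuples p M.
            g 0 e a b * G e a b r as bs)"
    by (simp only: power_Suc2 sum_mult_product sum_tuples_Suc) (intro sum.cong refl split, simp)
  also have "\<dots> = (\<Sum>e<q. \<Sum>a<p. \<Sum>b<p. g 0 e a b *
      (\<Sum>r<q ^ M. \<Sum>as\<in>tuples p M. \<Sum>bs\<in>tuples p M. G e a b r as bs))"
    by (simp add: sum_distrib_left sum.swap[of _ "{..<q ^ M}"] sum.swap[of _ "tuples p M" "{..<p}"])
  also have "\<dots> = (\<Sum>e<q. \<Sum>a<p. \<Sum>b<p. \<Sum>d<p. (if h 0 e a b mod p = d then g 0 e a b else 0)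
      * convolution p M (\<lambda>m. D (Suc m)) ((z + p - d) mod p))"
    using Suc.prems by (simp add: IH Z_def if_distrib[of "\<lambda>x. x * _"] cong: if_cong)
  also have "\<dots> = (\<Sum>d<p. \<Sum>e<q. \<Sum>a<p. \<Sum>b<p. (if h 0 e a b mod p = d then g 0 e a b else 0)
      * convolution p M (\<lambda>m. D (Suc m)) ((z + p - d) mod p))"
    by (rule sum_swap_past_three[symmetric])
  also have "\<dots> = convolution p (Suc M) D z"
    by (simp add: D_def sum_distrib_right)
  finally show ?case
    unfolding D_def .
qed

section \<open>Roots of unity and Fourier inversion\<close>

lemma omega_pow_self:
  assumes "0 < p"
  shows "omega p ^ p = 1"
proof -
  have "real p * (2 * pi / real p) = 2 * pi" using assms by simp
  then show ?thesis unfolding omega_def Complex.DeMoivre by simp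
qed

lemma omega_pow_mod:
  assumes "0 < p"
  shows "omega p ^ (n mod p) = omega p ^ n"
proof -
  have "omega p ^ n = omega p ^ (p * (n div p) + n mod p)" by simp
  also have "\<dots> = omega p ^ (n mod p)"
    by (simp only: power_add power_mult omega_pow_self[OF assms]) simp
  finally show ?thesis ..
qed

lemma fourier_convolution:
  assumes "0 < p"
  shows "(\<Sum>z<p. complex_of_real (convolution p M D z) * omega p ^ (z * k))
     = (\<Prod>m<M. \<Sum>d<p. complex_of_real (D m d) * omega p ^ (d * k))"
proof (induction M arbitrary: D)
  case 0
  have "(\<Sum>z<p. complex_of_real (if z = 0 then 1 else 0) * omega p ^ (z * k))
      = (\<Sum>z<p. if z = 0 then 1 else 0)"
    by (rule sum.cong) auto
  then show ?case using assms by simp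
next
  case (Suc M)
  define C where "C = convolution p M (\<lambda>m. D (Suc m))"
  define F where "F = (\<Sum>z<p. complex_of_real (C z) * omega p ^ (z * k))"
  have shift: "(\<Sum>z<p. complex_of_real (C ((z + p - d) mod p)) * omega p ^ (z * k))
      = F * omega p ^ (d * k)" if "d < p" for d
  proof -
    have "(\<Sum>z<p. complex_of_real (C ((z + p - d) mod p)) * omega p ^ (z * k))
        = (\<Sum>z<p. complex_of_real (C (((z + d) mod p + p - d) mod p)) * omega p ^ ((z + d) mod p * k))"
      using sum_add_mod[OF assms, of "\<lambda>z. complex_of_real (C ((z + p - d) mod p)) * omega p ^ (z * k)" d]
      by simp
    also have "\<dots> = (\<Sum>z<p. complex_of_real (C z) * omega p ^ (z * k) * omega p ^ (d * k))"
    proof (rule sum.cong[OF refl])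
      fix z assume "z \<in> {..<p}"
      then have "((z + d) mod p + p - d) mod p = z"
        using that by (simp add: add_diff_mod_cancel)
      moreover have "omega p ^ ((z + d) mod p * k) = omega p ^ ((z + d) * k)"
        using omega_pow_mod[OF assms, of "(z + d) mod p * k"] omega_pow_mod[OF assms, of "(z + d) * k"]
        by (simp add: mod_mult_left_eq)
      ultimately show "complex_of_real (C (((z + d) mod p + p - d) mod p)) * omega p ^ ((z + d) mod p * k)
          = complex_of_real (C z) * omega p ^ (z * k) * omega p ^ (d * k)"
        by (simp only:) (simp add: algebra_simps power_add)
    qed
    finally show ?thesis
      by (simp add: F_def sum_distrib_right)
  qed
  have "(\<Sum>z<p. complex_of_real (convolution p (Suc M) D z) * omega p ^ (z * k))
     = (\<Sum>d<p. complex_of_real (D 0 d) *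
          (\<Sum>z<p. complex_of_real (C ((z + p - d) mod p)) * omega p ^ (z * k)))"
    by (simp add: C_def sum_distrib_left sum_distrib_right algebra_simps) (subst sum.swap, simp)
  also have "\<dots> = (\<Sum>d<p. complex_of_real (D 0 d) * (F * omega p ^ (d * k)))"
    by (intro sum.cong refl) (simp add: shift)
  also have "\<dots> = (\<Sum>d<p. complex_of_real (D 0 d) * omega p ^ (d * k)) * F"
    by (simp only: sum_distrib_right) (simp add: algebra_simps)
  finally show ?case
    using Suc.IH[of "\<lambda>m. D (Suc m)"]
    by (simp add: F_def C_def prod.lessThan_Suc_shift del: prod.lessThan_Suc)
qed

lemma sum_omega_pow:
  assumes "1 < p"
  shows "(\<Sum>k<p. omega p ^ (n * k)) = (if p dvd n then of_nat p else 0)"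
proof (cases "p dvd n")
  case True
  then obtain t where "n = p * t" by auto
  then have "omega p ^ (n * k) = 1" for k
    using assms by (simp add: power_mult omega_pow_self)
  then show ?thesis using True by simp
next
  case False
  define w where "w = omega p ^ n"
  have "w \<noteq> 1"
  proof
    assume "w = 1"
    moreover have "w = cis (real n * (2 * pi / real p))"
      unfolding w_def omega_def by (simp only: Complex.DeMoivre)
    ultimately obtain t :: int where "real n * (2 * pi / real p) = of_int t * 2 * pi"
      by (auto simp: complex_eq_iff cos_one_2pi_int)
    then have "real n = real p * of_int t"
      using assms by (simp add: field_simps)
    then have "int n = int p * t"
      by (metis of_int_eq_iff of_int_mult of_int_of_nat_eq)
    with False show False
      by (metis dvd_triv_left int_dvd_int_iff)
  qed
  moreover have "w ^ p = 1"
    using assms by (simp add: w_def power_mult[symmetric] mult.commute[of n] power_mult omega_pow_self)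
  ultimately show ?thesis
    using False by (simp add: w_def power_mult geometric_sum)
qed

lemma fourier_inversion:
  assumes "1 < p" "c < p"
  shows "1 / of_nat p * (\<Sum>k<p. omega p ^ (c * k) * (\<Sum>z<p. complex_of_real (f z) * omega p ^ (z * k)))
    = complex_of_real (f ((p - c) mod p))"
proof -
  have dvd_iff: "p dvd (c + z) \<longleftrightarrow> z = (p - c) mod p" if "z < p" for z
  proof
    assume "p dvd c + z"
    then obtain t where t: "c + z = p * t" by auto
    then have "p * t < p * 2" using assms that by linarith
    then have "t < 2" using mult_less_cancel1[of p t 2] by simp
    then show "z = (p - c) mod p" using t that assms by (cases t) (auto simp: less_Suc_eq)
  qed (use assms in \<open>cases "c = 0"; auto\<close>)
  have "(\<Sum>k<p. omega p ^ (c * k) * (\<Sum>z<p. complex_of_real (f z) * omega p ^ (z * k)))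
      = (\<Sum>z<p. complex_of_real (f z) * (\<Sum>k<p. omega p ^ ((c + z) * k)))"
    by (simp add: sum_distrib_left sum_distrib_right algebra_simps power_add)
       (subst sum.swap, simp add: algebra_simps)
  also have "\<dots> = (\<Sum>z<p. if z = (p - c) mod p then complex_of_real (f z) * of_nat p else 0)"
    using assms by (intro sum.cong refl) (simp add: sum_omega_pow dvd_iff)
  also have "\<dots> = complex_of_real (f ((p - c) mod p)) * of_nat p"
    using assms by simp
  finally show ?thesis
    using assms by simp
qed

section \<open>Entropy and mutual information\<close>

definition entropy :: "nat \<Rightarrow> (nat \<Rightarrow> real) \<Rightarrow> real" where
  "entropy p f = - (\<Sum>z<p. f z * log 2 (f z))"

lemma neg_sum_mult_ln_le:
  fixes f :: "'a \<Rightarrow> real"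
  assumes "finite A" "0 < card A" "\<And>a. a \<in> A \<Longrightarrow> 0 \<le> f a"
  shows "- (\<Sum>a\<in>A. f a * ln (f a)) \<le> sum f A * ln (card A) - sum f A * ln (sum f A)"
proof (cases "sum f A = 0")
  case True
  then have "\<forall>a\<in>A. f a = 0"
    using sum_nonneg_eq_0_iff[OF assms(1)] assms(3) by blast
  then show ?thesis by simp
next
  case False
  define S where "S = sum f A"
  define n where "n = real (card A)"
  have "0 \<le> S" unfolding S_def using assms(3) by (simp add: sum_nonneg)
  then have "0 < S" using False by (simp add: S_def)
  have "0 < n" using assms(2) by (simp add: n_def)
  have "f a * ln S - f a * ln n - f a * ln (f a) \<le> S / n - f a" if "a \<in> A" for a
  proof (cases "f a = 0")
    case True
    then show ?thesis using \<open>0 < S\<close> \<open>0 < n\<close> by simp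
  next
    case False
    then have "0 < f a" using assms(3)[OF that] by simp
    have "ln (S / (n * f a)) \<le> S / (n * f a) - 1"
      using \<open>0 < S\<close> \<open>0 < n\<close> \<open>0 < f a\<close> by (intro ln_le_minus_one) simp
    also have "ln (S / (n * f a)) = ln S - ln n - ln (f a)"
      using \<open>0 < S\<close> \<open>0 < n\<close> \<open>0 < f a\<close> by (simp add: ln_div ln_mult)
    finally have "f a * (ln S - ln n - ln (f a)) \<le> f a * (S / (n * f a) - 1)"
      using \<open>0 < f a\<close> by (intro mult_left_mono) auto
    then show ?thesis
      using \<open>0 < f a\<close> by (simp add: algebra_simps)
  qed
  then have "(\<Sum>a\<in>A. f a * ln S - f a * ln n - f a * ln (f a)) \<le> (\<Sum>a\<in>A. S / n - f a)"
    by (rule sum_mono)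
  then show ?thesis
    using \<open>0 < n\<close> by (simp add: S_def n_def sum_subtractf flip: sum_distrib_right)
qed

text \<open>Fano's inequality: the outcomes other than \<open>z0\<close> carry at most the entropy of the
  uniform distribution on \<open>p - 1\<close> points.\<close>

lemma entropy_le_T_p:
  fixes f :: "nat \<Rightarrow> real"
  assumes "2 \<le> p" "\<And>z. z < p \<Longrightarrow> 0 \<le> f z" "(\<Sum>z<p. f z) = 1" "z0 < p"
  shows "entropy p f \<le> T_p p (f z0)"
proof -
  define A where "A = {..<p} - {z0}"
  have A: "finite A" "card A = p - 1" "sum f A = 1 - f z0"
    using assms(3,4) sum.remove[of "{..<p}" z0 f] by (auto simp: A_def)
  have "- (\<Sum>a\<in>A. f a * ln (f a)) \<le> (1 - f z0) * ln (real p - 1) - (1 - f z0) * ln (1 - f z0)"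
    using neg_sum_mult_ln_le[of A f] A assms(1,2) by (simp add: A_def of_nat_diff)
  from divide_right_mono[OF this, of "ln 2"] have "- (\<Sum>a\<in>A. f a * log 2 (f a))
      \<le> (1 - f z0) * log 2 (real p - 1) - (1 - f z0) * log 2 (1 - f z0)"
    by (simp add: log_def sum_divide_distrib[symmetric] diff_divide_distrib[symmetric])
  moreover have "entropy p f = - f z0 * log 2 (f z0) - (\<Sum>a\<in>A. f a * log 2 (f a))"
    unfolding entropy_def A_def using assms(4) sum.remove[of "{..<p}" z0 "\<lambda>z. f z * log 2 (f z)"]
    by simp
  ultimately show ?thesis
    unfolding T_p_def bin_entropy_def by simp
qed

lemma mutual_info_shift_channel:
  fixes f :: "nat \<Rightarrow> real"
  assumes "0 < p" "\<And>z. z < p \<Longrightarrow> 0 \<le> f z" "(\<Sum>z<p. f z) = 1"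
    and "\<And>u v. u < p \<Longrightarrow> v < p \<Longrightarrow> Q u v = f ((v + p - u) mod p) / real p"
  shows "mutual_info p Q = log 2 (real p) - entropy p f"
proof -
  define \<phi> where "\<phi> z = (if f z = 0 then 0 else f z / real p * log 2 (real p * f z))" for z
  have row: "(\<Sum>v'<p. Q u v') = 1 / real p" if "u < p" for u
    using that assms(1,3,4) sum_diff_mod[of p u f] by (simp flip: sum_divide_distrib)
  have col: "(\<Sum>u'<p. Q u' v) = 1 / real p" if "v < p" for v
    using that assms(3,4) sum_reflect_mod[OF that, of f] by (simp flip: sum_divide_distrib)
  have "(if Q u v = 0 then 0 else Q u v * log 2 (Q u v / ((\<Sum>v'<p. Q u v') * (\<Sum>u'<p. Q u' v))))
      = \<phi> ((v + p - u) mod p)" if "u < p" "v < p" for u v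
    using assms(1) unfolding row[OF that(1)] col[OF that(2)] assms(4)[OF that] \<phi>_def
    by (auto simp: field_simps)
  then have "mutual_info p Q = (\<Sum>u<p. \<Sum>v<p. \<phi> ((v + p - u) mod p))"
    unfolding mutual_info_def by (intro sum.cong refl) auto
  also have "\<dots> = (\<Sum>z<p. real p * \<phi> z)"
    using assms(1) by (simp add: sum_diff_mod sum_distrib_left)
  also have "\<dots> = (\<Sum>z<p. f z * log 2 (real p) + f z * log 2 (f z))"
    using assms(1,2) by (intro sum.cong refl) (auto simp: \<phi>_def log_mult algebra_simps)
  also have "\<dots> = log 2 (real p) - entropy p f"
    using assms(3) by (simp add: entropy_def sum.distrib flip: sum_distrib_right)
  finally show ?thesis .
qed

section \<open>Monotonicity and inversion of \<open>T_p\<close>\<close>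

lemma continuous_on_T_p:
  assumes "0 < a" "a < 1"
  shows "continuous_on {a..1} (T_p p)"
proof -
  have "continuous (at x within {a..1}) (\<lambda>x::real. (1 - x) * log 2 (1 - x))" if "x \<in> {a..1}" for x
  proof (cases "x < 1")
    case True
    have "isCont (\<lambda>x::real. (1 - x) * log 2 (1 - x)) x"
      using True by (auto intro!: continuous_intros simp: log_def)
    then show ?thesis
      by (rule continuous_at_imp_continuous_at_within)
  next
    case False
    then have "x = 1" using that by simp
    have "((\<lambda>x::real. (1 - x) * log 2 (1 - x)) \<longlongrightarrow> 0) (at_left 1)"
      unfolding log_def by real_asymp
    then show ?thesis
      unfolding \<open>x = 1\<close> continuous_within at_within_Icc_at_left[OF assms(2)] by simp
  qed
  then have "continuous_on {a..1} (\<lambda>x::real. (1 - x) * log 2 (1 - x))"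
    using continuous_on_eq_continuous_within by blast
  moreover have "continuous_on {a..1} (\<lambda>x::real. x * log 2 x)"
    using assms by (auto intro!: continuous_intros simp: log_def)
  moreover have "T_p p = (\<lambda>x. - (x * log 2 x) - (1 - x) * log 2 (1 - x) + (1 - x) * log 2 (real p - 1))"
    unfolding T_p_def bin_entropy_def by (auto simp: fun_eq_iff)
  ultimately show ?thesis
    by (auto intro!: continuous_intros)
qed

lemma T_p_has_real_derivative:
  assumes "0 < x" "x < 1"
  shows "(T_p p has_real_derivative (ln (1 - x) - ln x - ln (real p - 1)) / ln 2) (at x)"
proof -
  have "T_p p = (\<lambda>x. (- (x * ln x) - (1 - x) * ln (1 - x) + (1 - x) * ln (real p - 1)) / ln 2)"
    unfolding T_p_def bin_entropy_def log_def
    by (auto simp: fun_eq_iff diff_divide_distrib add_divide_distrib)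
  moreover have "((\<lambda>x. - (x * ln x) - (1 - x) * ln (1 - x) + (1 - x) * ln (real p - 1))
      has_real_derivative (ln (1 - x) - ln x - ln (real p - 1))) (at x)"
    using assms by (intro derivative_eq_intros refl) auto
  ultimately show ?thesis
    by (simp add: DERIV_cdivide)
qed

lemma T_p_strict_antimono:
  assumes "2 \<le> p" "1 / real p \<le> a" "a < b" "b \<le> 1"
  shows "T_p p b < T_p p a"
proof (rule DERIV_neg_imp_decreasing_open[OF assms(3)])
  have "0 < 1 / real p" "1 / real p < 1" using assms(1) by auto
  show "continuous_on {a..b} (T_p p)"
    using continuous_on_T_p[OF \<open>0 < 1 / real p\<close> \<open>1 / real p < 1\<close>]
    by (rule continuous_on_subset) (use assms in auto)
  fix x assume "a < x" "x < b"
  then have "1 / real p < x" "x < 1" "0 < x"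
    using assms \<open>0 < 1 / real p\<close> by linarith+
  then have "1 - x < x * (real p - 1)"
    using assms(1) by (simp add: field_simps)
  then have "ln (1 - x) < ln (x * (real p - 1))"
    using \<open>0 < x\<close> \<open>x < 1\<close> assms(1) by (simp add: ln_less_cancel_iff)
  then have "ln (1 - x) - ln x - ln (real p - 1) < 0"
    using \<open>0 < x\<close> assms(1) by (simp add: ln_mult)
  then show "\<exists>y. (T_p p has_real_derivative y) (at x) \<and> y < 0"
    using T_p_has_real_derivative[OF \<open>0 < x\<close> \<open>x < 1\<close>, of p]
    by (intro exI[of _ "(ln (1 - x) - ln x - ln (real p - 1)) / ln 2"]) (simp add: divide_neg_pos)
qed

lemma T_p_one: "T_p p 1 = 0"
  unfolding T_p_def bin_entropy_def by simp

lemma T_p_inverse_p: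
  assumes "2 \<le> p"
  shows "T_p p (1 / real p) = log 2 (real p)"
proof -
  define L K q where "L = log 2 (real p)" and "K = log 2 (real p - 1)" and "q = 1 / real p"
  have "0 < real p" "0 < real p - 1" using assms by auto
  have "1 - q = (real p - 1) / real p"
    using \<open>0 < real p\<close> by (simp add: q_def field_simps)
  then have "log 2 (1 - q) = K - L"
    using \<open>0 < real p\<close> \<open>0 < real p - 1\<close> by (simp add: K_def L_def log_divide)
  moreover have "log 2 q = - L"
    using \<open>0 < real p\<close> by (simp add: q_def L_def log_divide)
  ultimately have "T_p p q = - q * (- L) - (1 - q) * (K - L) + (1 - q) * K"
    unfolding T_p_def bin_entropy_def K_def by simp
  also have "\<dots> = L"
    by (simp add: algebra_simps)
  finally show ?thesis by (simp add: q_def L_def)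
qed

lemma T_p_inv_eq:
  assumes "2 \<le> p" "1 / real p \<le> y" "y \<le> 1"
  shows "T_p_inv p (T_p p y) = y"
  unfolding T_p_inv_def
proof (rule the_equality)
  fix z assume z: "z \<in> {1 / real p..1} \<and> T_p p z = T_p p y"
  show "z = y"
  proof (rule ccontr)
    assume "z \<noteq> y"
    then consider "z < y" | "y < z" by linarith
    then show False
    proof cases
      case 1
      then show False using z T_p_strict_antimono[OF assms(1) _ 1 assms(3)] by simp
    next
      case 2
      then show False using z T_p_strict_antimono[OF assms(1,2) 2] by simp
    qed
  qed
qed (use assms in simp)

lemma le_T_p_inv:
  assumes "2 \<le> p" "0 \<le> t" "t \<le> log 2 (real p)" "x \<le> 1" "t \<le> T_p p x"
  shows "x \<le> T_p_inv p t"
proof (rule ccontr)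
  assume "\<not> x \<le> T_p_inv p t"
  have "0 < 1 / real p" "1 / real p < 1" using assms(1) by auto
  then have "\<exists>y. 1 / real p \<le> y \<and> y \<le> 1 \<and> T_p p y = t"
    by (intro IVT2'[OF _ _ _ continuous_on_T_p])
       (use assms(2,3) T_p_one T_p_inverse_p[OF assms(1)] in simp_all)
  then obtain y where y: "1 / real p \<le> y" "y \<le> 1" "T_p p y = t"
    by blast
  then have "y < x"
    using T_p_inv_eq[OF assms(1) y(1,2)] \<open>\<not> x \<le> T_p_inv p t\<close> by simp
  then have "T_p p x < t"
    using T_p_strict_antimono[OF assms(1) y(1) _ assms(4)] y(3) by simp
  with assms(5) show False by simp
qed

text \<open>Here \<open>b + (p - a)\<close> stands for \<open>b - a\<close> modulo \<open>p\<close>, avoiding truncated subtraction;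
  \<open>randomised_noise p P x0 y0\<close> is the distribution of \<open>b - a + x y\<close> when the box is
  queried at \<open>x = x0 + s\<close>, \<open>y = y0 + t\<close> with \<open>s, t\<close> uniform.\<close>

definition randomised_noise :: "nat \<Rightarrow> (nat \<Rightarrow> nat \<Rightarrow> nat \<Rightarrow> nat \<Rightarrow> real) \<Rightarrow> nat \<Rightarrow> nat \<Rightarrow> nat \<Rightarrow> real"
  where "randomised_noise p P x0 y0 d = (\<Sum>s<p. \<Sum>t<p. \<Sum>a<p. \<Sum>b<p.
     if (b + (p - a) + (x0 + s) mod p * ((y0 + t) mod p)) mod p = d
     then P a b ((x0 + s) mod p) ((y0 + t) mod p) / (real p * real p) else 0)"

lemma diff_add_mult_mod_eq_iff:
  fixes a b d x y p :: nat
  assumes "a < p" "b < p" "d < p"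
  shows "(b + (p - a) + x * y) mod p = d \<longleftrightarrow> b = nat ((int a - int x * int y + int d) mod int p)"
proof -
  define b0 where "b0 = nat ((int a - int x * int y + int d) mod int p)"
  have "0 < p" using assms by simp
  have b0: "int b0 = (int a - int x * int y + int d) mod int p" "b0 < p"
    using \<open>0 < p\<close> by (simp_all add: b0_def nat_less_iff)
  have "int (p - a) = int p - int a"
    using assms(1) by simp
  then have "int ((b0 + (p - a) + x * y) mod p) = (int b0 + (int p - int a) + int x * int y) mod int p"
    by (simp only: zmod_int of_nat_add of_nat_mult)
  also have "\<dots> = ((int a - int x * int y + int d) + (int p - int a) + int x * int y) mod int p"
    unfolding b0(1) by (simp only: add.assoc mod_add_left_eq)
  also have "\<dots> = int d"
    using assms(3) by simp
  finally have "(b0 + (p - a) + x * y) mod p = d"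
    by (simp only: of_nat_eq_iff)
  moreover have "b = b0" if "(b + (p - a) + x * y) mod p = (b0 + (p - a) + x * y) mod p"
  proof (rule inj_onD[OF bij_betw_imp_inj_on[OF bij_betw_add_mod[OF \<open>0 < p\<close>]]])
    show "(b + (p - a + x * y)) mod p = (b0 + (p - a + x * y)) mod p"
      using that by (simp only: add.assoc)
  qed (use assms(2) b0(2) in auto)
  ultimately show ?thesis
    unfolding b0_def[symmetric] by auto
qed

lemma randomised_noise_eq_mu:
  assumes "0 < p" "d < p"
  shows "randomised_noise p P x0 y0 d = mu p P d"
proof -
  define \<Phi> where "\<Phi> x y = (\<Sum>a<p. \<Sum>b<p. if (b + (p - a) + x * y) mod p = d
      then P a b x y / (real p * real p) else 0)" for x y
  have "randomised_noise p P x0 y0 d = (\<Sum>s<p. \<Sum>t<p. \<Phi> ((s + x0) mod p) ((t + y0) mod p))"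
    by (simp only: randomised_noise_def \<Phi>_def add.commute[of x0] add.commute[of y0])
  also have "\<dots> = (\<Sum>s<p. \<Sum>y<p. \<Phi> ((s + x0) mod p) y)"
    by (rule sum.cong[OF refl], rule sum_add_mod[OF assms(1)])
  also have "\<dots> = (\<Sum>x<p. \<Sum>y<p. \<Phi> x y)"
    by (rule sum_add_mod[OF assms(1), of "\<lambda>x. \<Sum>y<p. \<Phi> x y"])
  also have "\<dots> = (\<Sum>x<p. \<Sum>y<p. \<Sum>k<p.
      P k (nat ((int k - int x * int y + int d) mod int p)) x y / (real p * real p))"
  proof (intro sum.cong refl)
    fix x y
    have "\<Phi> x y = (\<Sum>a<p. \<Sum>b<p. if b = nat ((int a - int x * int y + int d) mod int p)
        then P a b x y / (real p * real p) else 0)"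
      unfolding \<Phi>_def
    proof (rule sum.cong[OF refl], rule sum.cong[OF refl])
      fix a b assume "a \<in> {..<p}" "b \<in> {..<p}"
      then show "(if (b + (p - a) + x * y) mod p = d then P a b x y / (real p * real p) else 0)
        = (if b = nat ((int a - int x * int y + int d) mod int p) then P a b x y / (real p * real p) else 0)"
        using diff_add_mult_mod_eq_iff[of a p b d x y] assms(2) by simp
    qed
    also have "\<dots> = (\<Sum>k<p. P k (nat ((int k - int x * int y + int d) mod int p)) x y / (real p * real p))"
      using assms(1) by (simp add: nat_less_iff)
    finally show "\<Phi> x y = \<dots>" .
  qed
  also have "\<dots> = mu p P d"
    by (simp add: mu_def sum_divide_distrib power2_eq_square)
  finally show ?thesis .
qed

lemma sum_randomised_noise:
  assumes "0 < p" "is_box p P"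
  shows "(\<Sum>d<p. randomised_noise p P x0 y0 d) = 1"
proof -
  define X Y where "X s = (x0 + s) mod p" and "Y t = (y0 + t) mod p" for s t
  have "(\<Sum>d<p. randomised_noise p P x0 y0 d) = (\<Sum>s<p. \<Sum>t<p. \<Sum>a<p. \<Sum>d<p. \<Sum>b<p.
      if (b + (p - a) + X s * Y t) mod p = d then P a b (X s) (Y t) / (real p * real p) else 0)"
    unfolding randomised_noise_def X_def Y_def by (rule sum_swap_past_three)
  also have "\<dots> = (\<Sum>s<p. \<Sum>t<p. \<Sum>a<p. \<Sum>b<p. \<Sum>d<p.
      if (b + (p - a) + X s * Y t) mod p = d then P a b (X s) (Y t) / (real p * real p) else 0)"
    by (rule sum.cong[OF refl], rule sum.cong[OF refl], rule sum.cong[OF refl], rule sum.swap)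
  also have "\<dots> = (\<Sum>s<p. \<Sum>t<p. (\<Sum>a<p. \<Sum>b<p. P a b (X s) (Y t)) / (real p * real p))"
    using assms(1) by (simp add: sum_divide_distrib)
  also have "\<dots> = 1"
    using assms unfolding is_box_def X_def Y_def by simp
  finally show ?thesis .
qed

lemma mu_nonneg:
  assumes "0 < p" "is_box p P"
  shows "0 \<le> mu p P d"
proof -
  have "0 \<le> P k (nat ((int k - int x * int y + int d) mod int p)) x y"
    if "x < p" "y < p" "k < p" for x y k
    using assms that unfolding is_box_def by (simp add: nat_less_iff)
  then show ?thesis
    unfolding mu_def by (intro mult_nonneg_nonneg sum_nonneg) auto
qed

lemma sum_mu:
  assumes "0 < p" "is_box p P"
  shows "(\<Sum>d<p. mu p P d) = 1"
  using sum_randomised_noise[OF assms, of 0 0] randomised_noise_eq_mu[OF assms(1)] by simp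

section \<open>A protocol whose guess is the wanted input plus convolved noise\<close>

text \<open>Box \<open>m\<close> is queried by Alice at \<open>X\<^sub>m = x\<^sub>0 - x\<^sub>m\<^sub>+\<^sub>1 + s\<^sub>m\<close> and by Bob at
  \<open>Y\<^sub>m = [i = m + 1] + t\<^sub>m\<close>, where \<open>(s\<^sub>m, t\<^sub>m)\<close> is the uniform pair encoded by the base
  \<open>p * p\<close> digit \<open>m\<close> of the shared randomness.  Expanding \<open>X\<^sub>m Y\<^sub>m\<close> shows that Alice's
  message plus Bob's corrections \<open>b\<^sub>m + s\<^sub>m [i = m + 1]\<close> is
  \<open>x\<^sub>i + \<Sum>\<^sub>m (b\<^sub>m - a\<^sub>m + X\<^sub>m Y\<^sub>m)\<close>, and thanks to the shifts the summands are independent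
  and \<open>\<mu>\<close>-distributed.\<close>

definition rand_pair :: "nat \<Rightarrow> nat \<Rightarrow> nat \<Rightarrow> nat" where
  "rand_pair p r m = r div (p * p) ^ m mod (p * p)"

definition x_diff :: "nat \<Rightarrow> nat list \<Rightarrow> nat \<Rightarrow> nat" where
  "x_diff p xs m = (xs ! 0 + (p - xs ! Suc m)) mod p"

definition query_flag :: "nat \<Rightarrow> nat \<Rightarrow> nat" where
  "query_flag i m = (if i = Suc m then 1 else 0)"

definition alice_input :: "nat \<Rightarrow> nat list \<Rightarrow> nat \<Rightarrow> nat list \<Rightarrow> nat" where
  "alice_input p xs r as = x_diff p xs (length as) + rand_pair p r (length as) div p"

definition bob_input :: "nat \<Rightarrow> nat \<Rightarrow> nat \<Rightarrow> nat \<Rightarrow> nat list \<Rightarrow> nat" where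
  "bob_input p i q r bs = query_flag i (length bs) + rand_pair p r (length bs) mod p"

definition alice_message :: "nat \<Rightarrow> nat list \<Rightarrow> nat \<Rightarrow> nat list \<Rightarrow> nat" where
  "alice_message p xs r as = xs ! 0 + (\<Sum>m<length as. (p - as ! m)
     + x_diff p xs m * (rand_pair p r m mod p) + rand_pair p r m div p * (rand_pair p r m mod p))"

definition bob_guess :: "nat \<Rightarrow> nat \<Rightarrow> nat \<Rightarrow> nat \<Rightarrow> nat list \<Rightarrow> nat" where
  "bob_guess p i q r bs = q + (\<Sum>m<length bs. bs ! m + rand_pair p r m div p * query_flag i m)"

lemma first_input_mod_eq:
  assumes "xs \<in> tuples p (Suc M)" "i < Suc M"
  shows "xs ! 0 mod p = (xs ! i + (\<Sum>m<M. x_diff p xs m * query_flag i m)) mod p"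
proof (cases i)
  case (Suc j)
  then have "j < M" "xs ! i < p" using assms nth_tuples_less by auto
  then have "(xs ! i + (\<Sum>m<M. x_diff p xs m * query_flag i m)) mod p
      = (xs ! i + (xs ! 0 + (p - xs ! i))) mod p"
    by (simp add: query_flag_def Suc x_diff_def if_distrib[of "\<lambda>z. _ * z"] mod_add_right_eq cong: if_cong)
  also have "xs ! i + (xs ! 0 + (p - xs ! i)) = xs ! 0 + p"
    using \<open>xs ! i < p\<close> by simp
  finally show ?thesis by simp
qed (simp add: query_flag_def)

lemma box_term_mod_eq:
  fixes a b x y s t p :: nat
  shows "(b + (p - a) + (x + s) mod p * ((y + t) mod p)) mod p
       = ((p - a) + x * t + s * t + (b + s * y) + x * y) mod p"
proof -
  have "(b + (p - a) + (x + s) mod p * ((y + t) mod p)) mod p = (b + (p - a) + (x + s) * (y + t)) mod p"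
    by (metis mod_add_right_eq mod_mult_eq)
  then show ?thesis
    by (simp add: algebra_simps)
qed

lemma bob_guess_mod_eq:
  assumes "xs \<in> tuples p (Suc M)" "i < Suc M" "as \<in> tuples p M" "bs \<in> tuples p M"
  shows "bob_guess p i (alice_message p xs r as mod p) r bs mod p
    = (xs ! i + (\<Sum>m<M. bs ! m + (p - as ! m)
        + (x_diff p xs m + rand_pair p r m div p) mod p
          * ((query_flag i m + rand_pair p r m mod p) mod p))) mod p"
    (is "_ = (xs ! i + (\<Sum>m<M. ?h m)) mod p")
proof -
  define s t where "s m = rand_pair p r m div p" and "t m = rand_pair p r m mod p" for m
  define \<alpha> where "\<alpha> m = (p - as ! m) + x_diff p xs m * t m + s m * t m" for m
  define \<beta> where "\<beta> m = bs ! m + s m * query_flag i m" for m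
  have "length as = M" "length bs = M" using assms(3,4) by (auto simp: tuples_def)
  have h_mod: "?h m mod p = (\<alpha> m + \<beta> m + x_diff p xs m * query_flag i m) mod p" if "m < M" for m
    using box_term_mod_eq by (simp add: \<alpha>_def \<beta>_def s_def t_def)
  have "(\<Sum>m<M. ?h m) mod p = (\<Sum>m<M. ?h m mod p) mod p"
    by (simp only: mod_sum_eq)
  also have "\<dots> = (\<Sum>m<M. (\<alpha> m + \<beta> m + x_diff p xs m * query_flag i m) mod p) mod p"
    by (rule arg_cong[where f = "\<lambda>n. n mod p"], rule sum.cong[OF refl]) (simp add: h_mod)
  also have "\<dots> = ((\<Sum>m<M. \<alpha> m) + (\<Sum>m<M. \<beta> m) + (\<Sum>m<M. x_diff p xs m * query_flag i m)) mod p"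
    by (simp only: mod_sum_eq sum.distrib)
  finally have sum_h: "(\<Sum>m<M. ?h m) mod p
      = ((\<Sum>m<M. \<alpha> m) + (\<Sum>m<M. \<beta> m) + (\<Sum>m<M. x_diff p xs m * query_flag i m)) mod p" .
  have "bob_guess p i (alice_message p xs r as mod p) r bs mod p
      = (xs ! 0 + (\<Sum>m<M. \<alpha> m) + (\<Sum>m<M. \<beta> m)) mod p"
    unfolding bob_guess_def alice_message_def \<open>length as = M\<close> \<open>length bs = M\<close> \<alpha>_def \<beta>_def s_def t_def
    by (simp add: mod_add_left_eq)
  also have "\<dots> = (xs ! i + (\<Sum>m<M. x_diff p xs m * query_flag i m) + (\<Sum>m<M. \<alpha> m) + (\<Sum>m<M. \<beta> m)) mod p"
    using first_input_mod_eq[OF assms(1,2)] by (metis add.assoc mod_add_left_eq)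
  also have "\<dots> = (xs ! i + (\<Sum>m<M. ?h m)) mod p"
    using sum_h by (metis (no_types, lifting) add.assoc add.commute mod_add_right_eq)
  finally show ?thesis .
qed

lemma prot_out_prob_eq_convolution:
  assumes "0 < p" "xs \<in> tuples p (Suc M)" "i < Suc M" "v < p"
  shows "prot_out_prob p P M ((p * p) ^ M) (\<lambda>_. 1 / real ((p * p) ^ M))
      (alice_input p) (alice_message p) (bob_input p) (bob_guess p) xs i v
    = convolution p M (\<lambda>_. mu p P) ((v + p - xs ! i) mod p)"
proof -
  define X Y where "X m s = (x_diff p xs m + s) mod p" and "Y m t = (query_flag i m + t) mod p"
    for m s t
  define H G where "H m s t a b = b + (p - a) + X m s * Y m t"
    and "G m s t a b = P a b (X m s) (Y m t) / (real p * real p)" for m s t a b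
  define z where "z = (v + p - xs ! i) mod p"
  have summand: "1 / real ((p * p) ^ M) * (let q = alice_message p xs r as mod p in
       if bob_guess p i q r bs mod p = v
       then \<Prod>m<M. P (as ! m) (bs ! m) (alice_input p xs r (take m as) mod p)
                      (bob_input p i q r (take m bs) mod p)
       else 0)
    = (if (\<Sum>m<M. H m (rand_pair p r m div p) (rand_pair p r m mod p) (as ! m) (bs ! m)) mod p = z
       then \<Prod>m<M. G m (rand_pair p r m div p) (rand_pair p r m mod p) (as ! m) (bs ! m) else 0)"
    if "as \<in> tuples p M" "bs \<in> tuples p M" for r as bs
  proof -
    have "length as = M" "length bs = M" using that by (auto simp: tuples_def)
    have "bob_guess p i (alice_message p xs r as mod p) r bs mod p = v
      \<longleftrightarrow> (\<Sum>m<M. H m (rand_pair p r m div p) (rand_pair p r m mod p) (as ! m) (bs ! m)) mod p = z"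
      using bob_guess_mod_eq[OF assms(2,3) that, of r] add_mod_eq_iff[OF assms(4), of "xs ! i"]
        nth_tuples_less[OF assms(2,3)]
      by (simp add: H_def X_def Y_def z_def)
    moreover have "(\<Prod>m<M. P (as ! m) (bs ! m) (alice_input p xs r (take m as) mod p)
        (bob_input p i q r (take m bs) mod p)) / real ((p * p) ^ M)
      = (\<Prod>m<M. G m (rand_pair p r m div p) (rand_pair p r m mod p) (as ! m) (bs ! m))" for q
      by (simp add: G_def X_def Y_def alice_input_def bob_input_def \<open>length as = M\<close> \<open>length bs = M\<close>
          prod_dividef power_mult_distrib)
    ultimately show ?thesis
      by (simp add: Let_def)
  qed
  have "prot_out_prob p P M ((p * p) ^ M) (\<lambda>_. 1 / real ((p * p) ^ M))
      (alice_input p) (alice_message p) (bob_input p) (bob_guess p) xs i v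
    = (\<Sum>r<(p * p) ^ M. \<Sum>as\<in>tuples p M. \<Sum>bs\<in>tuples p M.
        if (\<Sum>m<M. H m (rand_pair p r m div p) (rand_pair p r m mod p) (as ! m) (bs ! m)) mod p = z
        then \<Prod>m<M. G m (rand_pair p r m div p) (rand_pair p r m mod p) (as ! m) (bs ! m) else 0)"
    unfolding prot_out_prob_def sum_distrib_left by (intro sum.cong refl) (rule summand)
  also have "\<dots> = convolution p M (\<lambda>m d. \<Sum>e<p * p. \<Sum>a<p. \<Sum>b<p.
      if H m (e div p) (e mod p) a b mod p = d then G m (e div p) (e mod p) a b else 0) z"
    using sum_prod_mod_eq_convolution[where z = z and p = p and q = "p * p" and M = M
        and h = "\<lambda>m e. H m (e div p) (e mod p)" and g = "\<lambda>m e. G m (e div p) (e mod p)"] assms(1)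
    unfolding rand_pair_def z_def by simp
  also have "\<dots> = convolution p M (\<lambda>_. mu p P) z"
  proof (rule convolution_cong)
    fix m d :: nat
    assume "d < p"
    have "(\<Sum>e<p * p. \<Sum>a<p. \<Sum>b<p.
        if H m (e div p) (e mod p) a b mod p = d then G m (e div p) (e mod p) a b else 0)
      = (\<Sum>s<p. \<Sum>t<p. \<Sum>a<p. \<Sum>b<p. if H m s t a b mod p = d then G m s t a b else 0)"
      by (rule sum_lessThan_square)
    also have "\<dots> = randomised_noise p P (x_diff p xs m) (query_flag i m) d"
      by (simp only: randomised_noise_def H_def G_def X_def Y_def)
    also have "\<dots> = mu p P d"
      using assms(1) \<open>d < p\<close> by (rule randomised_noise_eq_mu)
    finally show "(\<Sum>e<p * p. \<Sum>a<p. \<Sum>b<p.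
        if H m (e div p) (e mod p) a b mod p = d then G m (e div p) (e mod p) a b else 0) = mu p P d" .
  qed
  finally show ?thesis
    unfolding z_def .
qed

lemma ic_joint_eq_convolution:
  assumes "0 < p" "i < Suc M" "u < p" "v < p"
  shows "ic_joint p P (Suc M) M ((p * p) ^ M) (\<lambda>_. 1 / real ((p * p) ^ M))
      (alice_input p) (alice_message p) (bob_input p) (bob_guess p) i u v
    = convolution p M (\<lambda>_. mu p P) ((v + p - u) mod p) / real p"
proof -
  have "ic_joint p P (Suc M) M ((p * p) ^ M) (\<lambda>_. 1 / real ((p * p) ^ M))
      (alice_input p) (alice_message p) (bob_input p) (bob_guess p) i u v
    = 1 / real p ^ Suc M * (\<Sum>xs\<in>tuples p (Suc M).
        if xs ! i = u then convolution p M (\<lambda>_. mu p P) ((v + p - u) mod p) else 0)"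
    unfolding ic_joint_def using prot_out_prob_eq_convolution[OF assms(1) _ assms(2,4)]
    by (intro arg_cong[where f = "\<lambda>x. 1 / real p ^ Suc M * x"] sum.cong refl) auto
  then show ?thesis
    using sum_tuples_nth_eq[OF assms(2,3)] assms(1) by simp
qed

lemma convolution_mu:
  assumes "0 < p" "is_box p P"
  shows "0 \<le> convolution p M (\<lambda>_. mu p P) z" and "(\<Sum>z<p. convolution p M (\<lambda>_. mu p P) z) = 1"
  using convolution_nonneg[of "\<lambda>_. mu p P"] mu_nonneg[OF assms] sum_convolution[OF assms(1)] sum_mu[OF assms]
  by simp_all

lemma entropy_convolution_mu_ge:
  assumes "2 \<le> p" "is_box p P" "info_causality p P" "1 \<le> N"
  shows "(real N - 1) / real N * log 2 (real p) \<le> entropy p (convolution p (N - 1) (\<lambda>_. mu p P))"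
proof -
  define M where "M = N - 1"
  have "N = Suc M" "0 < p" using assms(1,4) by (auto simp: M_def)
  let ?Q = "ic_joint p P N M ((p * p) ^ M) (\<lambda>_. 1 / real ((p * p) ^ M))
      (alice_input p) (alice_message p) (bob_input p) (bob_guess p)"
  have "mutual_info p (?Q i) = log 2 (real p) - entropy p (convolution p M (\<lambda>_. mu p P))"
    if "i < N" for i
    using mutual_info_shift_channel[OF \<open>0 < p\<close> convolution_mu[OF \<open>0 < p\<close> assms(2)]]
      ic_joint_eq_convolution[OF \<open>0 < p\<close>] that \<open>N = Suc M\<close> by simp
  moreover have "(\<Sum>i<N. mutual_info p (?Q i)) \<le> log 2 (real p)"
    using assms(3,4) \<open>0 < p\<close> unfolding info_causality_def by auto
  ultimately have "real N * (log 2 (real p) - entropy p (convolution p M (\<lambda>_. mu p P))) \<le> log 2 (real p)"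
    by simp
  then show ?thesis
    using assms(4) by (simp add: M_def field_simps)
qed

theorem theorem2:
  fixes p :: nat and P :: "nat \<Rightarrow> nat \<Rightarrow> nat \<Rightarrow> nat \<Rightarrow> real" and N c :: nat
  assumes "prime p"
    and "is_box p P"
    and "no_signalling p P"
    and "info_causality p P"
    and "1 \<le> N" and "N \<le> p"
    and "c < p"
  shows "(1 / of_nat p) * (\<Sum>k<p. omega p ^ (c * k) *
            (\<Sum>j<p. complex_of_real (mu p P j) * omega p ^ (j * k)) ^ (N - 1))
         \<le> complex_of_real (T_p_inv p ((real N - 1) / real N * log 2 (real p)))"
proof -
  define \<nu> where "\<nu> = convolution p (N - 1) (\<lambda>_. mu p P)"
  define z0 where "z0 = (p - c) mod p"
  have "2 \<le> p" using assms(1) by (rule prime_ge_2_nat)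
  then have "0 < p" "1 < p" "z0 < p" by (auto simp: z0_def)
  note \<nu> = convolution_mu[OF \<open>0 < p\<close> assms(2), of "N - 1", folded \<nu>_def]
  have "1 / of_nat p * (\<Sum>k<p. omega p ^ (c * k) *
      (\<Sum>j<p. complex_of_real (mu p P j) * omega p ^ (j * k)) ^ (N - 1)) = complex_of_real (\<nu> z0)"
    using fourier_inversion[OF \<open>1 < p\<close> assms(7), of \<nu>] fourier_convolution[OF \<open>0 < p\<close>, of "N - 1"]
    by (simp add: \<nu>_def z0_def)
  moreover have "\<nu> z0 \<le> T_p_inv p ((real N - 1) / real N * log 2 (real p))"
  proof (rule le_T_p_inv[OF \<open>2 \<le> p\<close>])
    show "0 \<le> (real N - 1) / real N * log 2 (real p)"
      "(real N - 1) / real N * log 2 (real p) \<le> log 2 (real p)"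
      using assms(5) \<open>2 \<le> p\<close> by (simp_all add: field_simps)
    show "\<nu> z0 \<le> 1"
      using member_le_sum[of z0 "{..<p}" \<nu>] \<nu> \<open>z0 < p\<close> by simp
    show "(real N - 1) / real N * log 2 (real p) \<le> T_p p (\<nu> z0)"
      using entropy_convolution_mu_ge[OF \<open>2 \<le> p\<close> assms(2,4,5)] entropy_le_T_p[OF \<open>2 \<le> p\<close> _ \<nu>(2) \<open>z0 < p\<close>] \<nu>(1)
      by (simp add: \<nu>_def)
  qed
  ultimately show ?thesis
    by (simp add: less_eq_complex_def)
qed

end
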